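(* Under the hypotheses of Theorem 7.3 (positive integers $a,d,r,h,n$, $r\geq2$, $\gcd(a,d)=\gcd(a,r)=1$, $d>hn(r-1)$, $a_0=a$, $a_{k+1}=ha+r^kd$ for $0\leq k\leq n$, $\{a_0,\dots,a_{n+1}\}$ minimally generating $\mathfrak{S}_{n+2}$), let $\ell_0=0$, let $\ell_i$ ($1\leq i\leq a-1$) be the digit sum of the $r$-adic representation of $i$ up to order $n$, and $L=\max\{\ell_i\mid 1\leq i\leq a-1\}$. Let $M=\mathfrak{S}_{n+2}\setminus\{0\}$ and let $\omega_{s,t}$ be the Apéry table entries defined in the context. Then for $0\leq t\leq a-1$ and $0\leq s\leq L$: $$\omega_{s,t}=\begin{cases}\ell_tha+td & \text{if } 0\leq s\leq\ell_t,\\ \ell_tha+td+(s-\ell_t)a & \text{if } \ell_t<s\leq L.\end{cases}$$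
   Context: The $r$-adic representation of $i$ up to order $n$ is the unique expression $i=\sum_{k=0}^{n}\alpha_kr^k$ with nonnegative integers $\alpha_k$, $0\leq\alpha_k\leq r-1$ for $k\leq n-1$ and $\alpha_n$ unrestricted. For $n\geq1$, $nM=M+\cdots+M$ ($n$ copies). Apéry table entries: $\omega_{0,t}$ is the element of $\mathrm{Ap}(\mathfrak{S}_{n+2},a)$ congruent to $td$ modulo $a$ ($\omega_{0,0}=0$), and for $s\geq1$, $\omega_{s,t}$ is the smallest element of $sM$ congruent to $td$ modulo $a$. *)

theory Defs
  imports Main
begin

inductive_set semigroup_gen :: "nat set \<Rightarrow> nat set" for A :: "nat set" where
  zero: "0 \<in> semigroup_gen A"
| add: "x \<in> A \<Longrightarrow> y \<in> semigroup_gen A \<Longrightarrow> x + y \<in> semigroup_gen A"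

definition minimal_gens :: "nat set \<Rightarrow> bool" where
  "minimal_gens A \<longleftrightarrow> (\<forall>g\<in>A. g \<notin> semigroup_gen (A - {g}))"

definition gens :: "nat \<Rightarrow> nat \<Rightarrow> nat \<Rightarrow> nat \<Rightarrow> nat \<Rightarrow> nat set" where
  "gens a d r h n = {a} \<union> {h * a + r ^ k * d | k. k \<le> n}"

definition apery :: "nat set \<Rightarrow> nat \<Rightarrow> nat set" where
  "apery S a = {x \<in> S. \<not> (a \<le> x \<and> x - a \<in> S)}"

fun nfold :: "nat set \<Rightarrow> nat \<Rightarrow> nat set" where
  "nfold M 0 = {0}"
| "nfold M (Suc s) = {x + y | x y. x \<in> nfold M s \<and> y \<in> M}"

definition omega :: "nat set \<Rightarrow> nat \<Rightarrow> nat \<Rightarrow> nat \<Rightarrow> nat \<Rightarrow> nat" where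
  "omega S a d s t =
     (if s = 0 then (THE x. x \<in> apery S a \<and> x mod a = (t * d) mod a)
      else (LEAST x. x \<in> nfold (S - {0}) s \<and> x mod a = (t * d) mod a))"

definition radic_digit_sum :: "nat \<Rightarrow> nat \<Rightarrow> nat \<Rightarrow> nat" where
  "radic_digit_sum r n i = (\<Sum>k<n. (i div r ^ k) mod r) + i div r ^ n"

definition ell :: "nat \<Rightarrow> nat \<Rightarrow> nat \<Rightarrow> nat" where
  "ell r n i = (if i = 0 then 0 else radic_digit_sum r n i)"

end

theory Submission
  imports Defs "HOL-Number_Theory.Cong"
begin

(* Every element of S is (c + h B) a + m d, where m is a sum of B powers r^k with k \<le> n, and it
   lies in sM exactly when s \<le> c + B.  Carrying shows that B is at least the r-adic digit sum of m,
   and the r-adic representation itself attains it.  In the residue class of t d, coprimality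
   forces m \<equiv> t (mod a).  Either m = t, and then B \<ge> l_t; or m \<ge> t + a, and then the extra d a
   outweighs the saving of at most h (l_t - B) a, because l_t \<le> n (r - 1) + B and d > h n (r - 1).
   So the least element of sM in that class is reached by m = t, B = l_t, c = max (s - l_t) 0. *)

lemma radic_digit_sum_0 [simp]: "radic_digit_sum r 0 x = x"
  by (simp add: radic_digit_sum_def)

lemma radic_digit_sum_Suc:
  "radic_digit_sum r (Suc N) x = x mod r + radic_digit_sum r N (x div r)"
  unfolding radic_digit_sum_def
  by (simp only: sum.lessThan_Suc_shift) (simp add: div_mult2_eq)

lemma radic_digit_sum_of_0 [simp]: "radic_digit_sum r N 0 = 0"
  by (simp add: radic_digit_sum_def)

lemma ell_eq_radic_digit_sum: "ell r n i = radic_digit_sum r n i"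
  by (simp add: ell_def)

lemma radic_digit_sum_le:
  assumes "r \<ge> 1"
  shows "radic_digit_sum r N x \<le> N * (r - 1) + x div r ^ N"
proof -
  have "(x div r ^ k) mod r \<le> r - 1" for k
    using assms mod_less_divisor[of r "x div r ^ k"] by linarith
  then have "(\<Sum>k<N. (x div r ^ k) mod r) \<le> N * (r - 1)"
    using sum_bounded_above[of "{..<N}" "\<lambda>k. (x div r ^ k) mod r" "r - 1"] by simp
  then show ?thesis by (simp add: radic_digit_sum_def)
qed

lemma radic_digit_sum_add_power:
  assumes "r \<ge> 2" "k \<le> N"
  shows "radic_digit_sum r N (m + r ^ k) \<le> radic_digit_sum r N m + 1"
  using assms(2)
proof (induction N arbitrary: m k)
  case 0
  then show ?case by simp
next
  case (Suc N)
  show ?case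
  proof (cases k)
    case 0
    then show ?thesis
      using Suc.IH[of 0 "m div r"]
      by (cases "Suc (m mod r) = r") (simp_all add: radic_digit_sum_Suc mod_Suc div_Suc)
  next
    case (Suc k')
    then have "(m + r ^ k) mod r = m mod r" "(m + r ^ k) div r = m div r + r ^ k'"
      using assms(1) by simp_all
    then show ?thesis
      using Suc.IH[of k' "m div r"] Suc.prems \<open>k = Suc k'\<close> by (simp add: radic_digit_sum_Suc)
  qed
qed

inductive_set power_sums :: "nat \<Rightarrow> nat \<Rightarrow> (nat \<times> nat) set" for r N where
  empty: "(0, 0) \<in> power_sums r N"
| add_power: "(m, B) \<in> power_sums r N \<Longrightarrow> k \<le> N \<Longrightarrow> (m + r ^ k, Suc B) \<in> power_sums r N"

lemma power_sums_count_0: "(m, 0) \<in> power_sums r N \<Longrightarrow> m = 0"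
  by (cases rule: power_sums.cases) auto

lemma power_sums_le:
  assumes "(m, B) \<in> power_sums r N" "r \<ge> 1"
  shows "m \<le> B * r ^ N"
  using assms(1)
proof (induction rule: power_sums.induct)
  case empty
  then show ?case by simp
next
  case (add_power m B k)
  then have "r ^ k \<le> r ^ N" using assms(2) by (simp add: power_increasing)
  then show ?case using add_power.IH by simp
qed

lemma radic_digit_sum_le_count:
  assumes "(m, B) \<in> power_sums r N" "r \<ge> 2"
  shows "radic_digit_sum r N m \<le> B"
  using assms(1)
proof induction
  case empty
  then show ?case by simp
next
  case (add_power m B k)
  then show ?case using radic_digit_sum_add_power[OF assms(2) add_power.hyps(2), of m] by simp
qed

lemma power_sums_add:
  "(m, B) \<in> power_sums r N \<Longrightarrow> (m', B') \<in> power_sums r N \<Longrightarrow> (m + m', B + B') \<in> power_sums r N"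
proof (induction rule: power_sums.induct)
  case empty
  then show ?case by simp
next
  case (add_power m B k)
  then show ?case using power_sums.add_power[of "m + m'" "B + B'" r N k] by (simp add: ac_simps)
qed

lemma power_sums_mult:
  "(m, B) \<in> power_sums r N \<Longrightarrow> (r * m, B) \<in> power_sums r (Suc N)"
proof (induction rule: power_sums.induct)
  case empty
  then show ?case using power_sums.empty by simp
next
  case (add_power m B k)
  then show ?case using power_sums.add_power[of "r * m" B r "Suc N" "Suc k"] by (simp add: distrib_left)
qed

lemma power_sums_ones: "(c, c) \<in> power_sums r N"
proof (induction c)
  case 0
  then show ?case by (rule power_sums.empty)
next
  case (Suc c)
  then show ?case using power_sums.add_power[of c c r N 0] by simp
qed

lemma radic_digit_sum_mem_power_sums: "(x, radic_digit_sum r N x) \<in> power_sums r N"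
proof (induction N arbitrary: x)
  case 0
  then show ?case using power_sums_ones by simp
next
  case (Suc N)
  from power_sums_add[OF power_sums_ones power_sums_mult[OF Suc.IH[of "x div r"]], of "x mod r"]
  show ?case by (simp add: radic_digit_sum_Suc add.commute)
qed

lemma semigroup_gen_base: "x \<in> A \<Longrightarrow> x \<in> semigroup_gen A"
  using semigroup_gen.add[OF _ semigroup_gen.zero] by simp

lemma semigroup_gen_add:
  "x \<in> semigroup_gen A \<Longrightarrow> y \<in> semigroup_gen A \<Longrightarrow> x + y \<in> semigroup_gen A"
  by (induction rule: semigroup_gen.induct) (auto simp: add.assoc intro: semigroup_gen.add)

lemma semigroup_gen_mult:
  "a \<in> A \<Longrightarrow> c * a \<in> semigroup_gen A"
  by (induction c) (auto intro: semigroup_gen.intros)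

lemma nfold_add:
  "x \<in> nfold M s \<Longrightarrow> y \<in> nfold M t \<Longrightarrow> x + y \<in> nfold M (s + t)"
proof (induction t arbitrary: y)
  case 0
  then show ?case by simp
next
  case (Suc t)
  then obtain y' z where "y = y' + z" "y' \<in> nfold M t" "z \<in> M" by auto
  then have "x + y = (x + y') + z" by simp
  then show ?case using Suc.IH[OF Suc.prems(1) \<open>y' \<in> nfold M t\<close>] \<open>z \<in> M\<close>
    unfolding add_Suc_right nfold.simps by blast
qed

lemma nfold_mono: "M \<subseteq> M' \<Longrightarrow> nfold M s \<subseteq> nfold M' s"
  by (induction s) auto

lemma nfold_subset_semigroup_gen: "nfold A s \<subseteq> semigroup_gen A"
proof (induction s)
  case 0
  then show ?case by (simp add: semigroup_gen.zero)
next
  case (Suc s)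
  show ?case
  proof
    fix x assume "x \<in> nfold A (Suc s)"
    then obtain y z where "x = z + y" "y \<in> nfold A s" "z \<in> A" by (auto simp: add.commute)
    then show "x \<in> semigroup_gen A" using Suc.IH by (auto intro: semigroup_gen.add)
  qed
qed

lemma nfold_Suc_subset:
  assumes "\<And>x y. x \<in> M \<Longrightarrow> y \<in> M \<Longrightarrow> x + y \<in> M"
  shows "nfold M (Suc (Suc k)) \<subseteq> nfold M (Suc k)"
proof
  fix x assume "x \<in> nfold M (Suc (Suc k))"
  then obtain y z z' where "x = (y + z') + z" "y \<in> nfold M k" "z' \<in> M" "z \<in> M" by auto
  then show "x \<in> nfold M (Suc k)" using assms by (fastforce simp: add.assoc)
qed

lemma nfold_antimono:
  assumes "\<And>x y. x \<in> M \<Longrightarrow> y \<in> M \<Longrightarrow> x + y \<in> M" "1 \<le> s" "s \<le> k"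
  shows "nfold M k \<subseteq> nfold M s"
  using assms(3)
proof (induction rule: dec_induct)
  case base
  then show ?case by simp
next
  case (step k)
  then show ?case using nfold_Suc_subset[OF assms(1), of "k - 1"] assms(2) by simp
qed

lemma gens_combination_mem_nfold:
  assumes "(m, B) \<in> power_sums r n"
  shows "(c + h * B) * a + m * d \<in> nfold (gens a d r h n) (c + B)"
proof -
  have "c * a \<in> nfold (gens a d r h n) c"
  proof (induction c)
    case (Suc c)
    have "a \<in> gens a d r h n" by (simp add: gens_def)
    then show ?case
      using Suc unfolding nfold.simps by (intro CollectI exI[of _ "c * a"] exI[of _ a]) simp
  qed simp
  moreover have "h * B * a + m * d \<in> nfold (gens a d r h n) B"
    using assms
  proof induction
    case (add_power m B k)
    have "h * a + r ^ k * d \<in> gens a d r h n" using add_power.hyps(2) by (auto simp: gens_def)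
    moreover have "h * Suc B * a + (m + r ^ k) * d = (h * B * a + m * d) + (h * a + r ^ k * d)"
      by (simp add: algebra_simps)
    ultimately show ?case
      using add_power.IH unfolding nfold.simps by blast
  qed simp
  ultimately have "c * a + (h * B * a + m * d) \<in> nfold (gens a d r h n) (c + B)"
    by (rule nfold_add)
  then show ?thesis by (simp add: algebra_simps)
qed

lemma mem_semigroup_gen_gens_iff:
  "x \<in> semigroup_gen (gens a d r h n) \<longleftrightarrow>
     (\<exists>c m B. (m, B) \<in> power_sums r n \<and> x = (c + h * B) * a + m * d)"
proof
  assume "x \<in> semigroup_gen (gens a d r h n)"
  then show "\<exists>c m B. (m, B) \<in> power_sums r n \<and> x = (c + h * B) * a + m * d"
  proof induction
    case zero
    then show ?case using power_sums.empty by (intro exI[of _ 0]) auto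
  next
    case (add x y)
    then obtain c m B where cmB: "(m, B) \<in> power_sums r n" "y = (c + h * B) * a + m * d"
      by blast
    from add.hyps(1) consider "x = a" | k where "k \<le> n" "x = h * a + r ^ k * d"
      by (auto simp: gens_def)
    then show ?case
    proof cases
      case 1
      then show ?thesis using cmB by (intro exI[of _ "Suc c"] exI[of _ m] exI[of _ B]) auto
    next
      case 2
      then show ?thesis using cmB power_sums.add_power[OF cmB(1) 2(1)]
        by (intro exI[of _ c] exI[of _ "m + r ^ k"] exI[of _ "Suc B"]) (auto simp: algebra_simps)
    qed
  qed
next
  assume "\<exists>c m B. (m, B) \<in> power_sums r n \<and> x = (c + h * B) * a + m * d"
  then show "x \<in> semigroup_gen (gens a d r h n)"
    using gens_combination_mem_nfold nfold_subset_semigroup_gen by blast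
qed

lemma mem_nfold_gens_iff:
  assumes "a > 0" "h > 0" "s \<ge> 1"
  shows "x \<in> nfold (semigroup_gen (gens a d r h n) - {0}) s \<longleftrightarrow>
     (\<exists>c m B. (m, B) \<in> power_sums r n \<and> x = (c + h * B) * a + m * d \<and> s \<le> c + B)"
    (is "x \<in> nfold ?M s \<longleftrightarrow> ?combination s x")
proof
  have "?combination s x" if "x \<in> nfold ?M s" for s x
    using that
  proof (induction s arbitrary: x)
    case 0
    then show ?case using power_sums.empty by (intro exI[of _ 0]) auto
  next
    case (Suc s)
    then obtain y z where "x = y + z" "y \<in> nfold ?M s" "z \<in> ?M" by auto
    from Suc.IH[OF \<open>y \<in> nfold ?M s\<close>] obtain c m B where
      y: "(m, B) \<in> power_sums r n" "y = (c + h * B) * a + m * d" "s \<le> c + B" by blast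
    from \<open>z \<in> ?M\<close> have "z \<noteq> 0" by simp
    from \<open>z \<in> ?M\<close> obtain c' m' B' where
      z: "(m', B') \<in> power_sums r n" "z = (c' + h * B') * a + m' * d"
      unfolding Diff_iff mem_semigroup_gen_gens_iff by blast
    have "c' + B' \<ge> 1"
      using z \<open>z \<noteq> 0\<close> power_sums_count_0 by (cases "c' + B'") auto
    then show ?case using power_sums_add[OF y(1) z(1)] y z(2) \<open>x = y + z\<close>
      by (intro exI[of _ "c + c'"] exI[of _ "m + m'"] exI[of _ "B + B'"]) (auto simp: algebra_simps)
  qed
  then show "x \<in> nfold ?M s \<Longrightarrow> ?combination s x" .
next
  assume "?combination s x"
  then obtain c m B where cmB: "(m, B) \<in> power_sums r n" "x = (c + h * B) * a + m * d" "s \<le> c + B"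
    by blast
  have "gens a d r h n \<subseteq> ?M"
    using assms(1,2) semigroup_gen_base[of _ "gens a d r h n"] by (auto simp: gens_def)
  moreover have "\<And>x y. x \<in> ?M \<Longrightarrow> y \<in> ?M \<Longrightarrow> x + y \<in> ?M"
    by (auto intro: semigroup_gen_add)
  ultimately have "nfold (gens a d r h n) (c + B) \<subseteq> nfold ?M s"
    using nfold_mono[of "gens a d r h n" ?M "c + B"] nfold_antimono[of ?M s "c + B"] cmB(3) assms(3)
    by blast
  then show "x \<in> nfold ?M s"
    using gens_combination_mem_nfold[OF cmB(1)] cmB(2) by blast
qed

lemma combination_lower_bound:
  assumes "r \<ge> 2" "h > 0" "coprime a d" "d > h * n * (r - 1)" "t < a"
    and "(m, B) \<in> power_sums r n" "s \<le> c + B"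
    and "((c + h * B) * a + m * d) mod a = (t * d) mod a"
  shows "(s - radic_digit_sum r n t + h * radic_digit_sum r n t) * a + t * d
           \<le> (c + h * B) * a + m * d"
proof -
  define l where "l = radic_digit_sum r n t"
  have "[m * d = t * d] (mod a)"
    using assms(8) by (simp add: cong_def)
  then have "m mod a = t"
    using cong_mult_rcancel_nat[of d a m t] assms(3,5) by (simp add: cong_def coprime_commute)
  then have m: "m = t + a * (m div a)"
    by (metis add.commute div_mult_mod_eq mult.commute)
  then have "t \<le> m"
    by linarith
  show ?thesis
  proof (cases "l \<le> B")
    case True
    have "B - l \<le> h * (B - l)"
      using assms(2) by simp
    moreover have "h * B = h * l + h * (B - l)"
      using True by (simp add: diff_mult_distrib2)
    ultimately have "s - l + h * l \<le> c + h * B"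
      using assms(7) by linarith
    moreover have "t * d \<le> m * d"
      using \<open>t \<le> m\<close> by simp
    ultimately show ?thesis
      unfolding l_def[symmetric] by (meson add_le_mono mult_le_mono1)
  next
    case False
    then have "m \<noteq> t"
      using radic_digit_sum_le_count[OF assms(6,1)] l_def by auto
    then have "a \<le> a * (m div a)"
      using m by (cases "m div a") auto
    then have "a + t \<le> m"
      using m by linarith
    then have "a * d + t * d \<le> m * d"
      by (metis add_mult_distrib mult_le_mono1)
    have "t \<le> B * r ^ n"
      using \<open>t \<le> m\<close> power_sums_le[OF assms(6)] assms(1) by fastforce
    then have "t div r ^ n \<le> B"
      using div_le_mono[of t "B * r ^ n" "r ^ n"] assms(1) by simp
    then have "l \<le> n * (r - 1) + B"
      using radic_digit_sum_le[of r n t] assms(1) l_def by simp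
    then have "h * l \<le> h * n * (r - 1) + h * B"
      by (metis add_mult_distrib2 mult.assoc mult_le_mono2)
    then have "h * l < d + h * B"
      using assms(4) by linarith
    then have "s - l + h * l \<le> c + h * B + d"
      using assms(7) False by linarith
    then have "(s - l + h * l) * a \<le> (c + h * B) * a + a * d"
      by (metis add_mult_distrib mult.commute mult_le_mono1)
    then show ?thesis
      using \<open>a * d + t * d \<le> m * d\<close> unfolding l_def[symmetric] by linarith
  qed
qed

lemma the_apery_eq_least:
  assumes "a \<in> A" "a > 0" "v \<in> semigroup_gen A" "v mod a = q"
    and least: "\<And>y. y \<in> semigroup_gen A \<Longrightarrow> y mod a = q \<Longrightarrow> v \<le> y"
  shows "(THE x. x \<in> apery (semigroup_gen A) a \<and> x mod a = q) = v"
proof (rule the_equality)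
  have "\<not> (a \<le> v \<and> v - a \<in> semigroup_gen A)"
  proof
    assume "a \<le> v \<and> v - a \<in> semigroup_gen A"
    moreover from this have "(v - a) mod a = q"
      using assms(4) by (simp add: mod_if)
    ultimately show False
      using least[of "v - a"] assms(2) by linarith
  qed
  then show "v \<in> apery (semigroup_gen A) a \<and> v mod a = q"
    using assms(3,4) by (simp add: apery_def)
next
  fix x assume x: "x \<in> apery (semigroup_gen A) a \<and> x mod a = q"
  then have "v \<le> x"
    using least by (simp add: apery_def)
  then obtain k where k: "x = v + a * k"
    using x assms(4) mod_eq_nat1E[of x a v] by metis
  show "x = v"
  proof (rule ccontr)
    assume "x \<noteq> v"
    then obtain k' where "k = Suc k'"
      using k by (cases k) auto
    then have "a \<le> x" "x - a = k' * a + v"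
      using k by (simp_all add: algebra_simps)
    moreover have "k' * a + v \<in> semigroup_gen A"
      using semigroup_gen_add[OF semigroup_gen_mult[OF assms(1)] assms(3)] .
    ultimately show False
      using x by (simp add: apery_def)
  qed
qed

lemma omega_gens_eq:
  assumes "a > 0" "r \<ge> 2" "h > 0" "coprime a d" "d > h * n * (r - 1)" "t < a"
  shows "omega (semigroup_gen (gens a d r h n)) a d s t
           = (s - radic_digit_sum r n t + h * radic_digit_sum r n t) * a + t * d"
    (is "omega ?S a d s t = ?v s")
proof -
  define l where "l = radic_digit_sum r n t"
  have t_sum: "(t, l) \<in> power_sums r n"
    unfolding l_def by (rule radic_digit_sum_mem_power_sums)
  show ?thesis
  proof (cases "s = 0")
    case True
    have "?v 0 \<in> ?S"
      unfolding mem_semigroup_gen_gens_iff l_def[symmetric] using t_sum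
      by (intro exI[of _ 0] exI[of _ t] exI[of _ l]) simp
    moreover have "?v 0 \<le> y" if "y \<in> ?S" "y mod a = (t * d) mod a" for y
      using that combination_lower_bound[OF assms(2-6), of _ _ 0]
      unfolding mem_semigroup_gen_gens_iff by fastforce
    ultimately show ?thesis
      using the_apery_eq_least[of a "gens a d r h n"] assms(1) True
      by (simp add: omega_def gens_def)
  next
    case False
    then have nfold_iff: "y \<in> nfold (?S - {0}) s \<longleftrightarrow>
        (\<exists>c m B. (m, B) \<in> power_sums r n \<and> y = (c + h * B) * a + m * d \<and> s \<le> c + B)" for y
      using mem_nfold_gens_iff[OF assms(1,3)] by simp
    have "?v s \<in> nfold (?S - {0}) s"
      unfolding nfold_iff l_def[symmetric] using t_sum
      by (intro exI[of _ "s - l"] exI[of _ t] exI[of _ l]) auto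
    moreover have "?v s \<le> y" if "y \<in> nfold (?S - {0}) s" "y mod a = (t * d) mod a" for y
      using that combination_lower_bound[OF assms(2-6)] unfolding nfold_iff by fastforce
    ultimately show ?thesis
      using False unfolding omega_def by (auto intro!: Least_equality)
  qed
qed

theorem theorem7p5:
  fixes a d r h n :: nat
  assumes "a > 0" "d > 0" "r \<ge> 2" "h > 0" "n > 0"
    and "coprime a d" "coprime a r"
    and "d > h * n * (r - 1)"
    and "minimal_gens (gens a d r h n)"
  defines "S \<equiv> semigroup_gen (gens a d r h n)"
    and "L \<equiv> Max {ell r n i | i. 1 \<le> i \<and> i \<le> a - 1}"
  shows "\<forall>t s. t \<le> a - 1 \<and> s \<le> L \<longrightarrow>
           omega S a d s t =
             (if s \<le> ell r n t then ell r n t * h * a + t * d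
              else ell r n t * h * a + t * d + (s - ell r n t) * a)"
proof (intro allI impI)
  \<comment> \<open>The formula holds for every s.\<close>
  fix t s
  assume "t \<le> a - 1 \<and> s \<le> L"
  then have "t < a"
    using assms(1) by linarith
  then show "omega S a d s t =
      (if s \<le> ell r n t then ell r n t * h * a + t * d
       else ell r n t * h * a + t * d + (s - ell r n t) * a)"
    unfolding S_def omega_gens_eq[OF assms(1,3,4,6,8) \<open>t < a\<close>] ell_eq_radic_digit_sum
    by (simp add: algebra_simps)
qed

end
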